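(* Let $n\ge 1$ and $A\subseteq[n]$. Define the reverse complement $A^*=\{n+1-i : i\in[n]\setminus A\}$. Let $C_1=D_X(A)$ and $C_2=D_X(A^* )$. Then $C_2$ is exactly the set of orders obtained from the orders of $C_1$ by first reversing each order (replacing it by its dual) and then renaming each alternative $i$ as $n+1-i$.
   Context: Alternatives are $X=[n]=\{1,\dots,n\}$, with societal axis $1<2<\dots<n$. Linear orders are written as strings, leftmost alternative ranked highest. The dual (reverse) of a linear order $q$ is the order ranking $x$ above $y$ iff $q$ ranks $y$ above $x$. For $A\subseteq[n]$, the set-alternating domain $D_X(A)$ is the set of all linear orders $q$ on $[n]$ such that for every triple $i<j<k$ in $[n]$: if $j\in A$ then $i$ is not ranked last among $\{i,j,k\}$ in $q$ (never condition $1N3$), and if $j\notin A$ then $k$ is not ranked first among $\{i,j,k\}$ in $q$ (never condition $3N1$). *)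

theory Defs
  imports Main
begin

text \<open>A linear order on [n] = {1..n} is represented as a list (a string),
  leftmost alternative ranked highest.\<close>

definition is_linorder :: "nat \<Rightarrow> nat list \<Rightarrow> bool" where
  "is_linorder n q \<longleftrightarrow> distinct q \<and> set q = {1..n}"

definition ranks_above :: "nat list \<Rightarrow> nat \<Rightarrow> nat \<Rightarrow> bool" where
  "ranks_above q x y \<longleftrightarrow> (\<exists>a b. a < b \<and> b < length q \<and> q ! a = x \<and> q ! b = y)"

definition dual_order :: "nat list \<Rightarrow> nat list" where
  "dual_order q = rev q"

definition set_alt_domain :: "nat \<Rightarrow> nat set \<Rightarrow> nat list set" where
  "set_alt_domain n A = {q. is_linorder n q \<and>
     (\<forall>i j k. 1 \<le> i \<and> i < j \<and> j < k \<and> k \<le> n \<longrightarrow>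
        (j \<in> A \<longrightarrow> \<not> (ranks_above q j i \<and> ranks_above q k i)) \<and>
        (j \<notin> A \<longrightarrow> \<not> (ranks_above q k i \<and> ranks_above q k j)))}"

definition rev_compl :: "nat \<Rightarrow> nat set \<Rightarrow> nat set" where
  "rev_compl n A = (\<lambda>i. n + 1 - i) ` ({1..n} - A)"

end

theory Submission
  imports Defs
begin

text \<open>Reversing an order and renaming each alternative i as n + 1 - i is an involution on
  linear orders of [n]. It sends a triple i < j < k to n + 1 - k < n + 1 - j < n + 1 - i and
  exchanges the two kinds of condition: never ranking i last becomes never ranking n + 1 - i
  first. So the mirrored middle alternative n + 1 - j carries the condition 1N3 exactly when
  j carried 3N1, i.e. when j is not in A, which is what A* records.\<close>

definition mirror_order :: "nat \<Rightarrow> nat list \<Rightarrow> nat list" where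
  "mirror_order n q = map (\<lambda>i. n + 1 - i) (dual_order q)"

lemma ranks_above_rev: "ranks_above (rev q) x y \<longleftrightarrow> ranks_above q y x"
proof
  assume "ranks_above (rev q) x y"
  then obtain a b where "a < b" "b < length q" "rev q ! a = x" "rev q ! b = y"
    unfolding ranks_above_def by auto
  then have "length q - Suc b < length q - Suc a" "length q - Suc a < length q"
    "q ! (length q - Suc b) = y" "q ! (length q - Suc a) = x"
    by (auto simp: rev_nth)
  then show "ranks_above q y x"
    unfolding ranks_above_def by blast
next
  assume "ranks_above q y x"
  then obtain a b where "a < b" "b < length q" "q ! a = y" "q ! b = x"
    unfolding ranks_above_def by auto
  then have "length q - Suc b < length q - Suc a" "length q - Suc a < length (rev q)"
    "rev q ! (length q - Suc b) = x" "rev q ! (length q - Suc a) = y"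
    by (auto simp: rev_nth)
  then show "ranks_above (rev q) x y"
    unfolding ranks_above_def by blast
qed

lemma ranks_above_map:
  assumes "inj_on f (insert x (insert y (set q)))"
  shows "ranks_above (map f q) (f x) (f y) \<longleftrightarrow> ranks_above q x y"
proof -
  have "f (q ! a) = f z \<longleftrightarrow> q ! a = z" if "a < length q" "z \<in> {x, y}" for a z
    using that by (intro inj_on_eq_iff[OF assms]) auto
  then show ?thesis
    unfolding ranks_above_def by (auto 0 4)
qed

lemma inj_on_flip: "inj_on (\<lambda>i::nat. n + 1 - i) {1..n}"
  by (auto simp: inj_on_def)

lemma ranks_above_mirror_order:
  assumes "set q \<subseteq> {1..n}" and "x \<in> {1..n}" and "y \<in> {1..n}"
  shows "ranks_above (mirror_order n q) x y \<longleftrightarrow> ranks_above q (n + 1 - y) (n + 1 - x)"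
proof -
  let ?f = "\<lambda>i::nat. n + 1 - i"
  have "insert (?f x) (insert (?f y) (set (rev q))) \<subseteq> {1..n}"
    using assms by auto
  then have "inj_on ?f (insert (?f x) (insert (?f y) (set (rev q))))"
    by (rule inj_on_subset[OF inj_on_flip])
  then have "ranks_above (map ?f (rev q)) (?f (?f x)) (?f (?f y)) \<longleftrightarrow> ranks_above q (?f y) (?f x)"
    by (simp add: ranks_above_map ranks_above_rev)
  moreover have "?f (?f x) = x" "?f (?f y) = y"
    using assms(2,3) by auto
  ultimately show ?thesis
    by (simp add: mirror_order_def dual_order_def)
qed

lemma mirror_order_mirror_order:
  assumes "set q \<subseteq> {1..n}"
  shows "mirror_order n (mirror_order n q) = q"
proof -
  have "map (\<lambda>i. n + 1 - (n + 1 - i)) q = map id q"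
    using assms by (intro map_cong) auto
  then show ?thesis
    by (simp add: mirror_order_def dual_order_def rev_map comp_def)
qed

lemma is_linorder_mirror_order:
  assumes "is_linorder n q"
  shows "is_linorder n (mirror_order n q)"
proof -
  have "x = n + 1 - (n + 1 - x)" "n + 1 - x \<in> {1..n}" if "x \<in> {1..n}" for x
    using that by auto
  then have "(\<lambda>i::nat. n + 1 - i) ` {1..n} = {1..n}"
    by fastforce
  then show ?thesis
    using assms inj_on_flip[of n]
    by (simp add: is_linorder_def mirror_order_def dual_order_def distinct_map)
qed

lemma mem_rev_compl_iff:
  assumes "j \<in> {1..n}"
  shows "j \<in> rev_compl n A \<longleftrightarrow> n + 1 - j \<notin> A"
  using assms unfolding rev_compl_def
  by (auto intro!: image_eqI[where x = "n + 1 - j"])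

lemma rev_compl_rev_compl:
  assumes "A \<subseteq> {1..n}"
  shows "rev_compl n (rev_compl n A) = A"
proof (rule set_eqI)
  fix x
  show "x \<in> rev_compl n (rev_compl n A) \<longleftrightarrow> x \<in> A"
  proof (cases "x \<in> {1..n}")
    case True
    then have "n + 1 - x \<in> {1..n}" "n + 1 - (n + 1 - x) = x" by auto
    with True show ?thesis by (simp add: mem_rev_compl_iff)
  next
    case False
    with assms show ?thesis unfolding rev_compl_def by auto
  qed
qed

lemma mirror_order_in_set_alt_domain:
  assumes "q \<in> set_alt_domain n A"
  shows "mirror_order n q \<in> set_alt_domain n (rev_compl n A)"
proof -
  have lin: "is_linorder n q"
    using assms unfolding set_alt_domain_def by blast
  then have set_q: "set q \<subseteq> {1..n}"
    unfolding is_linorder_def by blast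
  have "(j \<in> rev_compl n A \<longrightarrow>
           \<not> (ranks_above (mirror_order n q) j i \<and> ranks_above (mirror_order n q) k i)) \<and>
        (j \<notin> rev_compl n A \<longrightarrow>
           \<not> (ranks_above (mirror_order n q) k i \<and> ranks_above (mirror_order n q) k j))"
    if ijk: "1 \<le> i \<and> i < j \<and> j < k \<and> k \<le> n" for i j k
  proof -
    have "1 \<le> n + 1 - k \<and> n + 1 - k < n + 1 - j \<and> n + 1 - j < n + 1 - i \<and> n + 1 - i \<le> n"
      using ijk by auto
    then have "(n + 1 - j \<in> A \<longrightarrow>
                 \<not> (ranks_above q (n + 1 - j) (n + 1 - k) \<and> ranks_above q (n + 1 - i) (n + 1 - k))) \<and>
               (n + 1 - j \<notin> A \<longrightarrow>
                 \<not> (ranks_above q (n + 1 - i) (n + 1 - k) \<and> ranks_above q (n + 1 - i) (n + 1 - j)))"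
      using assms unfolding set_alt_domain_def by blast
    moreover have "i \<in> {1..n}" "j \<in> {1..n}" "k \<in> {1..n}"
      using ijk by auto
    ultimately show ?thesis
      by (auto simp add: mem_rev_compl_iff ranks_above_mirror_order[OF set_q])
  qed
  with is_linorder_mirror_order[OF lin] show ?thesis
    unfolding set_alt_domain_def by blast
qed

theorem lemma1:
  fixes n :: nat and A :: "nat set"
  assumes "n \<ge> 1" and "A \<subseteq> {1..n}"
  shows "set_alt_domain n (rev_compl n A) =
         (\<lambda>q. map (\<lambda>i. n + 1 - i) (dual_order q)) ` set_alt_domain n A"
proof -
  have "set_alt_domain n (rev_compl n A) \<subseteq> mirror_order n ` set_alt_domain n A"
  proof
    fix p
    assume p: "p \<in> set_alt_domain n (rev_compl n A)"
    then have "set p \<subseteq> {1..n}"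
      unfolding set_alt_domain_def is_linorder_def by blast
    then have "p = mirror_order n (mirror_order n p)"
      by (simp add: mirror_order_mirror_order)
    moreover have "mirror_order n p \<in> set_alt_domain n A"
      using mirror_order_in_set_alt_domain[OF p] rev_compl_rev_compl[OF assms(2)] by simp
    ultimately show "p \<in> mirror_order n ` set_alt_domain n A"
      by blast
  qed
  moreover have "mirror_order n ` set_alt_domain n A \<subseteq> set_alt_domain n (rev_compl n A)"
    using mirror_order_in_set_alt_domain by blast
  ultimately show ?thesis
    unfolding mirror_order_def[symmetric] by blast
qed

end
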